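(* Let $\mathfrak{g}$ be a finite-dimensional real Lie algebra. A star-product $\star$ on $\mathfrak{g}^*$ satisfying property (P1) is entirely determined by the products $(X)^n\star Y$, where $X,Y$ range over $\mathfrak{g}$ and $n$ over $\mathbb{N}$. That is, if $\star$ and $\star'$ are two star-products on $\mathfrak{g}^*$ both satisfying (P1) and $(X)^n\star Y=(X)^n\star' Y$ for all $X,Y\in\mathfrak{g}$ and all $n\in\mathbb{N}$, then $\star=\star'$.
   Context: Elements of $\mathfrak{g}$ are regarded as linear functions on $\mathfrak{g}^*$, and $(X)^n$ denotes the $n$-th pointwise power of $X$, an element of $S^n(\mathfrak{g})$ (polynomial functions on $\mathfrak{g}^*$). With $[X^i,X^j]=c_k^{ij}X^k$ in a basis $X^1,\dots,X^d$, the linear Poisson bracket is $\{a,b\}=c_k^{ij}X^k\partial_ia\,\partial_jb$. A star-product on $\mathfrak{g}^*$ is an $\mathbb{R}[[\epsilon]]$-bilinear associative product $a\star b=\sum_{j\ge0}\epsilon^j\Pi_j(a,b)$ on $C^\infty(\mathfrak{g}^* )[[\epsilon]]$ with bi-differential $\Pi_j$, $\Pi_0(a,b)=ab$ and $\Pi_1(a,b)-\Pi_1(b,a)=\{a,b\}$. Property (P1): for polynomials $p_n,q_m$ of degrees $n,m$, $p_n\star q_m=p_nq_m+r$ with $r$ a polynomial (coefficients in $\mathbb{R}[[\epsilon]]$) of degree at most $m+n-1$. *)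

theory Defs
  imports "HOL-Analysis.Analysis"
begin

text \<open>
  Setting: a finite-dimensional real Lie algebra g with basis X^i indexed by the finite
  type 'n, structure constants [X^i,X^j] = sum_k c i j k X^k.  The dual g* is identified
  with real^'n via the dual basis, so X^i is the coordinate function x |-> x$i and a
  general element of g (coefficient vector a) is the linear function x |-> a . x.
\<close>

definition lie_structure :: "('n::finite \<Rightarrow> 'n \<Rightarrow> 'n \<Rightarrow> real) \<Rightarrow> bool" where
  "lie_structure c \<longleftrightarrow>
     (\<forall>i j k. c i j k = - c j i k) \<and>
     (\<forall>i j l m. (\<Sum>k\<in>UNIV. c i j k * c k l m + c j l k * c k i m + c l i k * c k j m) = 0)"

definition partial :: "'n::finite \<Rightarrow> (real^'n \<Rightarrow> real) \<Rightarrow> real^'n \<Rightarrow> real" where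
  "partial i f x = deriv (\<lambda>t. f (x + t *\<^sub>R axis i 1)) 0"

definition dop :: "'n::finite list \<Rightarrow> (real^'n \<Rightarrow> real) \<Rightarrow> real^'n \<Rightarrow> real" where
  "dop u f = fold partial u f"

definition smooth :: "(real^'n::finite \<Rightarrow> real) \<Rightarrow> bool" where
  "smooth f \<longleftrightarrow> (\<forall>u. continuous_on UNIV (dop u f) \<and>
      (\<forall>i x. (\<lambda>t. dop u f (x + t *\<^sub>R axis i 1)) differentiable (at 0)))"

definition bidiff :: "((real^'n::finite \<Rightarrow> real) \<Rightarrow> (real^'n \<Rightarrow> real) \<Rightarrow> real^'n \<Rightarrow> real) \<Rightarrow> bool" where
  "bidiff P \<longleftrightarrow> (\<exists>S coef. finite (S :: ('n list \<times> 'n list) set) \<and> (\<forall>p\<in>S. smooth (coef p)) \<and>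
      (\<forall>f g. smooth f \<longrightarrow> smooth g \<longrightarrow>
         P f g = (\<lambda>x. \<Sum>(u,v)\<in>S. coef (u,v) x * dop u f x * dop v g x)))"

definition poisson :: "('n::finite \<Rightarrow> 'n \<Rightarrow> 'n \<Rightarrow> real) \<Rightarrow> (real^'n \<Rightarrow> real) \<Rightarrow> (real^'n \<Rightarrow> real) \<Rightarrow> real^'n \<Rightarrow> real" where
  "poisson c a b = (\<lambda>x. \<Sum>i\<in>UNIV. \<Sum>j\<in>UNIV. \<Sum>k\<in>UNIV. c i j k * x$k * partial i a x * partial j b x)"

text \<open>Elements of C^infinity(g*)[[eps]] are coefficient sequences; the R[[eps]]-bilinear
  extension of a*b = sum_j eps^j Pi_j(a,b).\<close>

definition star :: "(nat \<Rightarrow> (real^'n::finite \<Rightarrow> real) \<Rightarrow> (real^'n \<Rightarrow> real) \<Rightarrow> real^'n \<Rightarrow> real)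
     \<Rightarrow> (nat \<Rightarrow> real^'n \<Rightarrow> real) \<Rightarrow> (nat \<Rightarrow> real^'n \<Rightarrow> real) \<Rightarrow> nat \<Rightarrow> real^'n \<Rightarrow> real" where
  "star Pr A B = (\<lambda>k x. \<Sum>i\<le>k. \<Sum>j\<le>k - i. Pr i (A j) (B (k - i - j)) x)"

definition star_product :: "('n::finite \<Rightarrow> 'n \<Rightarrow> 'n \<Rightarrow> real)
     \<Rightarrow> (nat \<Rightarrow> (real^'n \<Rightarrow> real) \<Rightarrow> (real^'n \<Rightarrow> real) \<Rightarrow> real^'n \<Rightarrow> real) \<Rightarrow> bool" where
  "star_product c Pr \<longleftrightarrow>
     (\<forall>j. bidiff (Pr j)) \<and>
     (\<forall>a b. smooth a \<longrightarrow> smooth b \<longrightarrow> Pr 0 a b = (\<lambda>x. a x * b x)) \<and>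
     (\<forall>a b. smooth a \<longrightarrow> smooth b \<longrightarrow> (\<lambda>x. Pr 1 a b x - Pr 1 b a x) = poisson c a b) \<and>
     (\<forall>A B C. (\<forall>k. smooth (A k)) \<longrightarrow> (\<forall>k. smooth (B k)) \<longrightarrow> (\<forall>k. smooth (C k)) \<longrightarrow>
        star Pr (star Pr A B) C = star Pr A (star Pr B C))"

definition poly_le :: "int \<Rightarrow> (real^'n::finite \<Rightarrow> real) \<Rightarrow> bool" where
  "poly_le k p \<longleftrightarrow> (\<exists>coef :: ('n \<Rightarrow> nat) \<Rightarrow> real.
      p = (\<lambda>x. \<Sum>\<alpha>\<in>{\<alpha>. int (\<Sum>i\<in>UNIV. \<alpha> i) \<le> k}. coef \<alpha> * (\<Prod>i\<in>UNIV. (x$i) ^ \<alpha> i)))"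

definition poly_deg :: "nat \<Rightarrow> (real^'n::finite \<Rightarrow> real) \<Rightarrow> bool" where
  "poly_deg n p \<longleftrightarrow> poly_le (int n) p \<and> \<not> poly_le (int n - 1) p"

text \<open>(P1): p_n * q_m = p_n q_m + r, r a polynomial of degree at most n+m-1 with
  coefficients in R[[eps]], i.e. every eps-coefficient of r has degree at most n+m-1.\<close>

definition P1 :: "(nat \<Rightarrow> (real^'n::finite \<Rightarrow> real) \<Rightarrow> (real^'n \<Rightarrow> real) \<Rightarrow> real^'n \<Rightarrow> real) \<Rightarrow> bool" where
  "P1 Pr \<longleftrightarrow> (\<forall>p q n m. poly_deg n p \<longrightarrow> poly_deg m q \<longrightarrow>
      (\<forall>j. poly_le (int n + int m - 1)
             (\<lambda>x. Pr j p q x - (if j = 0 then p x * q x else 0))))"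

end

theory Submission
  imports Defs
begin

(*
  Both star products are bidifferential, so at a point they only see finitely many
  derivatives of their arguments; with Taylor polynomials (which need the symmetry of
  mixed partial derivatives) it suffices that they agree on pairs of polynomials.
  For fixed second argument x_i and point x, f |-> Pr_j(f, x_i)(x) - Pr'_j(f, x_i)(x)
  is linear and kills every power (X . x)^n; expanding (X . x)^n into monomials and
  differentiating in X at 0 shows that it kills every monomial.  Agreement on all pairs
  of polynomials then follows by induction on the degree of the second factor:
  associativity for p, x_i, g expresses p * (x_i g) through products p * x_i, products
  with g, and products with Pr_l(x_i, g) for l > 0, which have lower degree by (P1).
*)

section \<open>Partial derivatives\<close>

definition coord_differentiable :: "(real^'n::finite \<Rightarrow> real) \<Rightarrow> bool" where
  "coord_differentiable f \<longleftrightarrow> (\<forall>x i. (\<lambda>t. f (x + t *\<^sub>R axis i 1)) differentiable (at 0))"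

lemma has_real_derivative_partial:
  assumes "coord_differentiable f"
  shows "((\<lambda>t. f (x + t *\<^sub>R axis i 1)) has_real_derivative partial i f (x + s *\<^sub>R axis i 1)) (at s)"
proof -
  let ?y = "x + s *\<^sub>R axis i 1"
  have "((\<lambda>t. f (?y + t *\<^sub>R axis i 1)) has_real_derivative partial i f ?y) (at (s + - s))"
    using assms unfolding coord_differentiable_def partial_def
    by (simp add: DERIV_deriv_iff_real_differentiable)
  then have "((\<lambda>t. f (?y + (t + - s) *\<^sub>R axis i 1)) has_real_derivative partial i f ?y) (at s)"
    by (subst (asm) DERIV_shift) simp
  then show ?thesis
    by (simp add: algebra_simps)
qed

lemma partial_eqI:
  "((\<lambda>t. f (x + t *\<^sub>R axis i 1)) has_real_derivative D) (at 0) \<Longrightarrow> partial i f x = D"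
  unfolding partial_def by (rule DERIV_imp_deriv)

lemma partial_lincomb:
  assumes "coord_differentiable f" "coord_differentiable g"
  shows "partial i (\<lambda>x. a * f x + b * g x) = (\<lambda>x. a * partial i f x + b * partial i g x)"
proof
  fix x
  have "((\<lambda>t. a * f (x + t *\<^sub>R axis i 1) + b * g (x + t *\<^sub>R axis i 1)) has_real_derivative
      a * partial i f (x + 0 *\<^sub>R axis i 1) + b * partial i g (x + 0 *\<^sub>R axis i 1)) (at 0)"
    by (intro DERIV_add DERIV_cmult has_real_derivative_partial assms)
  then show "partial i (\<lambda>x. a * f x + b * g x) x = a * partial i f x + b * partial i g x"
    by (intro partial_eqI) simp
qed

lemma dop_Nil [simp]: "dop [] f = f"
  by (simp add: dop_def)

lemma dop_Cons [simp]: "dop (i # u) f = dop u (partial i f)"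
  by (simp add: dop_def)

lemma dop_append: "dop (u @ v) f = dop v (dop u f)"
  by (simp add: dop_def)

lemma partial_zero [simp]: "partial i (\<lambda>x. 0) = (\<lambda>x. 0)"
  by (rule ext, rule partial_eqI) simp

lemma dop_zero [simp]: "dop u (\<lambda>x. 0) = (\<lambda>x. 0)"
  by (induction u) simp_all

lemma smooth_zero: "smooth (\<lambda>x. 0)"
  unfolding smooth_def by simp

lemma smooth_dop: "smooth f \<Longrightarrow> smooth (dop u f)"
  unfolding smooth_def dop_append[symmetric] by blast

lemma smooth_partial: "smooth f \<Longrightarrow> smooth (partial i f)"
  using smooth_dop[of f "[i]"] by simp

lemma smooth_imp_coord_differentiable: "smooth f \<Longrightarrow> coord_differentiable f"
  unfolding smooth_def coord_differentiable_def by (metis dop_Nil)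

lemma dop_lincomb:
  "smooth f \<Longrightarrow> smooth g \<Longrightarrow>
    dop u (\<lambda>x. a * f x + b * g x) = (\<lambda>x. a * dop u f x + b * dop u g x)"
proof (induction u arbitrary: f g)
  case (Cons i u)
  then show ?case
    by (simp add: partial_lincomb smooth_imp_coord_differentiable smooth_partial)
qed simp

lemma dop_cmult: "smooth f \<Longrightarrow> dop u (\<lambda>x. a * f x) = (\<lambda>x. a * dop u f x)"
  using dop_lincomb[of f f u a 0] by simp

lemma smooth_lincomb:
  assumes "smooth f" "smooth g"
  shows "smooth (\<lambda>x. a * f x + b * g x)"
  unfolding smooth_def dop_lincomb[OF assms]
proof (intro allI conjI)
  fix u
  show "continuous_on UNIV (\<lambda>x. a * dop u f x + b * dop u g x)"
    using assms unfolding smooth_def by (intro continuous_intros) auto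
  fix i x
  show "(\<lambda>t. a * dop u f (x + t *\<^sub>R axis i 1) + b * dop u g (x + t *\<^sub>R axis i 1))
      differentiable (at 0)"
    using assms unfolding smooth_def by simp
qed

lemma smooth_sum:
  "finite A \<Longrightarrow> (\<And>a. a \<in> A \<Longrightarrow> smooth (F a)) \<Longrightarrow> smooth (\<lambda>x. \<Sum>a\<in>A. c a * F a x)"
proof (induction A rule: finite_induct)
  case (insert a A)
  then have "smooth (\<lambda>x. c a * F a x + 1 * (\<Sum>a\<in>A. c a * F a x))"
    by (intro smooth_lincomb) auto
  then show ?case
    using insert by simp
qed (simp add: smooth_zero)

lemma dop_sum:
  "finite A \<Longrightarrow> (\<And>a. a \<in> A \<Longrightarrow> smooth (F a)) \<Longrightarrow>
    dop u (\<lambda>x. \<Sum>a\<in>A. c a * F a x) = (\<lambda>x. \<Sum>a\<in>A. c a * dop u (F a) x)"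
proof (induction A rule: finite_induct)
  case (insert a A)
  then have "dop u (\<lambda>x. c a * F a x + 1 * (\<Sum>a\<in>A. c a * F a x)) =
      (\<lambda>x. c a * dop u (F a) x + 1 * dop u (\<lambda>x. \<Sum>a\<in>A. c a * F a x) x)"
    by (intro dop_lincomb smooth_sum) auto
  then show ?case
    using insert by simp
qed simp


section \<open>Symmetry of mixed partial derivatives\<close>

lemma mixed_difference_mvt:
  fixes f :: "real^'n::finite \<Rightarrow> real"
  assumes f: "smooth f" and s: "0 < s" and t: "0 < t"
  obtains \<sigma> \<tau> where "0 < \<sigma>" "\<sigma> < s" "0 < \<tau>" "\<tau> < t"
    "f (x + s *\<^sub>R axis i 1 + t *\<^sub>R axis j 1) - f (x + s *\<^sub>R axis i 1) - f (x + t *\<^sub>R axis j 1) + f x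
      = s * t * dop [i, j] f (x + \<sigma> *\<^sub>R axis i 1 + \<tau> *\<^sub>R axis j 1)"
proof -
  let ?ei = "axis i 1 :: real^'n" and ?ej = "axis j 1 :: real^'n"
  have df: "coord_differentiable f" and dg: "coord_differentiable (partial i f)"
    using f by (simp_all add: smooth_imp_coord_differentiable smooth_partial)
  define \<phi> where "\<phi> r = f (x + r *\<^sub>R ?ei + t *\<^sub>R ?ej) - f (x + r *\<^sub>R ?ei)" for r
  have d\<phi>: "(\<phi> has_real_derivative
      partial i f (x + r *\<^sub>R ?ei + t *\<^sub>R ?ej) - partial i f (x + r *\<^sub>R ?ei)) (at r)" for r
    using DERIV_diff[OF has_real_derivative_partial[OF df, of "x + t *\<^sub>R ?ej"]
        has_real_derivative_partial[OF df, of x]]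
    unfolding \<phi>_def by (simp add: algebra_simps)
  then obtain \<sigma> where \<sigma>: "0 < \<sigma>" "\<sigma> < s"
    "\<phi> s - \<phi> 0 = s * (partial i f (x + \<sigma> *\<^sub>R ?ei + t *\<^sub>R ?ej) - partial i f (x + \<sigma> *\<^sub>R ?ei))"
    using MVT2[OF s d\<phi>] by auto
  obtain \<tau> where \<tau>: "0 < \<tau>" "\<tau> < t"
    "partial i f (x + \<sigma> *\<^sub>R ?ei + t *\<^sub>R ?ej) - partial i f (x + \<sigma> *\<^sub>R ?ei + 0 *\<^sub>R ?ej)
      = (t - 0) * partial j (partial i f) (x + \<sigma> *\<^sub>R ?ei + \<tau> *\<^sub>R ?ej)"
    using MVT2[OF t has_real_derivative_partial[OF dg, of "x + \<sigma> *\<^sub>R ?ei"]] by blast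
  show thesis
    by (rule that[OF \<sigma>(1,2) \<tau>(1,2)]) (use \<sigma>(3) \<tau>(3) in \<open>simp add: \<phi>_def\<close>)
qed

lemma continuous_at_eq_if_near_coincide:
  fixes f g :: "'a::metric_space \<Rightarrow> 'b::metric_space"
  assumes "continuous (at x) f" "continuous (at x) g"
    and "\<And>e. 0 < e \<Longrightarrow> \<exists>y z. dist y x < e \<and> dist z x < e \<and> f y = g z"
  shows "f x = g x"
proof (rule ccontr)
  assume "f x \<noteq> g x"
  define \<epsilon> where "\<epsilon> = dist (f x) (g x) / 2"
  have "0 < \<epsilon>"
    using \<open>f x \<noteq> g x\<close> by (simp add: \<epsilon>_def)
  then obtain d1 d2 where "0 < d1" "0 < d2"
    and d1: "\<And>y. dist y x < d1 \<Longrightarrow> dist (f y) (f x) < \<epsilon>"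
    and d2: "\<And>z. dist z x < d2 \<Longrightarrow> dist (g z) (g x) < \<epsilon>"
    using assms(1,2) unfolding continuous_at_eps_delta by metis
  then obtain y z where "dist y x < d1" "dist z x < d2" and "f y = g z"
    using assms(3)[of "min d1 d2"] by auto
  have "dist (f x) (g x) \<le> dist (f y) (f x) + dist (g z) (g x)"
    using dist_triangle3[of "f x" "g x" "f y"] unfolding \<open>f y = g z\<close> .
  also have "\<dots> < 2 * \<epsilon>"
    using d1[OF \<open>dist y x < d1\<close>] d2[OF \<open>dist z x < d2\<close>] by linarith
  finally have "dist (f x) (g x) < 2 * \<epsilon>" .
  then show False
    by (simp add: \<epsilon>_def)
qed

lemma dist_add_scaleR_axis_less:
  assumes "0 < a" "a < s" "0 < b" "b < s"
  shows "dist (x + a *\<^sub>R axis k 1 + b *\<^sub>R axis l 1) (x :: real^'n::finite) < 2 * s"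
proof -
  have "dist (x + a *\<^sub>R axis k 1 + b *\<^sub>R axis l 1) x = norm (a *\<^sub>R axis k (1::real) + b *\<^sub>R axis l 1)"
    by (simp add: dist_norm)
  also have "\<dots> \<le> norm (a *\<^sub>R axis k (1::real)) + norm (b *\<^sub>R axis l (1::real))"
    by (rule norm_triangle_ineq)
  also have "\<dots> < 2 * s"
    using assms by simp
  finally show ?thesis .
qed

lemma partial_commute:
  fixes f :: "real^'n::finite \<Rightarrow> real"
  assumes f: "smooth f"
  shows "partial j (partial i f) = partial i (partial j f)"
proof
  fix x :: "real^'n"
  let ?p = "\<lambda>a b k l. x + a *\<^sub>R axis k 1 + b *\<^sub>R axis l (1::real)"
  show "partial j (partial i f) x = partial i (partial j f) x"
  proof (rule continuous_at_eq_if_near_coincide[of x])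
    have "continuous (at x) (dop u f)" for u
      using f unfolding smooth_def by (simp add: continuous_on_eq_continuous_at)
    from this[of "[i, j]"] this[of "[j, i]"]
    show "continuous (at x) (partial j (partial i f))" "continuous (at x) (partial i (partial j f))"
      by simp_all
    fix e :: real
    assume "0 < e"
    define s where "s = e / 2"
    have "0 < s"
      using \<open>0 < e\<close> by (simp add: s_def)
    \<comment> \<open>The second difference of f over the square of side s spanned by the i-th and j-th
      axes is symmetric in i and j, and equals s^2 times either mixed partial at a nearby point.\<close>
    obtain \<sigma> \<tau> where st: "0 < \<sigma>" "\<sigma> < s" "0 < \<tau>" "\<tau> < s"
      "f (?p s s i j) - f (x + s *\<^sub>R axis i 1) - f (x + s *\<^sub>R axis j 1) + f x
        = s * s * dop [i, j] f (?p \<sigma> \<tau> i j)"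
      using mixed_difference_mvt[OF f \<open>0 < s\<close> \<open>0 < s\<close>] by blast
    obtain \<sigma>' \<tau>' where st': "0 < \<sigma>'" "\<sigma>' < s" "0 < \<tau>'" "\<tau>' < s"
      "f (?p s s j i) - f (x + s *\<^sub>R axis j 1) - f (x + s *\<^sub>R axis i 1) + f x
        = s * s * dop [j, i] f (?p \<sigma>' \<tau>' j i)"
      using mixed_difference_mvt[OF f \<open>0 < s\<close> \<open>0 < s\<close>] by blast
    have "f (?p s s j i) = f (?p s s i j)"
      by (simp add: algebra_simps)
    then have "s * s * dop [i, j] f (?p \<sigma> \<tau> i j) = s * s * dop [j, i] f (?p \<sigma>' \<tau>' j i)"
      using st(5) st'(5) by linarith
    then have "partial j (partial i f) (?p \<sigma> \<tau> i j) = partial i (partial j f) (?p \<sigma>' \<tau>' j i)"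
      using \<open>0 < s\<close> by simp
    moreover have "dist (?p \<sigma> \<tau> i j) x < e" "dist (?p \<sigma>' \<tau>' j i) x < e"
      using dist_add_scaleR_axis_less[OF st(1-4)] dist_add_scaleR_axis_less[OF st'(1-4)]
      by (simp_all add: s_def)
    ultimately show "\<exists>y z. dist y x < e \<and> dist z x < e \<and> partial j (partial i f) y = partial i (partial j f) z"
      by blast
  qed
qed

lemma dop_snoc: "smooth f \<Longrightarrow> dop (v @ [i]) f = dop (i # v) f"
proof (induction v arbitrary: f)
  case (Cons k v)
  then show ?case
    by (simp add: smooth_partial partial_commute)
qed simp

lemma dop_mset_eq: "smooth f \<Longrightarrow> mset u = mset v \<Longrightarrow> dop u f = dop v f"
proof (induction u arbitrary: v f)
  case (Cons i u)
  then obtain v1 v2 where v: "v = v1 @ i # v2"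
    by (metis list.set_intros(1) set_mset_mset split_list)
  have "dop v f = dop v2 (dop (v1 @ [i]) f)"
    by (simp add: v dop_append[symmetric])
  also have "\<dots> = dop v2 (dop v1 (partial i f))"
    by (simp only: dop_snoc[OF Cons.prems(1)] dop_Cons)
  also have "\<dots> = dop (v1 @ v2) (partial i f)"
    by (simp add: dop_append)
  also have "\<dots> = dop u (partial i f)"
    using Cons.IH[of "partial i f" "v1 @ v2"] Cons.prems by (simp add: v smooth_partial)
  finally show ?case
    by simp
qed simp


section \<open>Monomials and polynomials\<close>

lemma prod_fun_upd_split:
  fixes f :: "'n::finite \<Rightarrow> nat \<Rightarrow> 'a::comm_monoid_mult"
  shows "(\<Prod>i\<in>UNIV. f i ((\<alpha>(k := m)) i)) = f k m * (\<Prod>i\<in>-{k}. f i (\<alpha> i))"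
  by (subst prod.remove[of UNIV k]) (auto simp: Compl_eq_Diff_UNIV intro!: prod.cong)

definition monomial_at :: "real^'n::finite \<Rightarrow> ('n \<Rightarrow> nat) \<Rightarrow> real^'n \<Rightarrow> real" where
  "monomial_at c \<alpha> x = (\<Prod>i\<in>UNIV. (x$i - c$i) ^ \<alpha> i)"

definition monomial :: "('n::finite \<Rightarrow> nat) \<Rightarrow> real^'n \<Rightarrow> real" where
  "monomial \<alpha> x = (\<Prod>i\<in>UNIV. (x$i) ^ \<alpha> i)"

lemma monomial_eq_monomial_at: "monomial \<alpha> = monomial_at 0 \<alpha>"
  by (simp add: fun_eq_iff monomial_def monomial_at_def)

lemma monomial_at_fun_upd:
  "monomial_at c (\<alpha>(k := m)) x = (x$k - c$k) ^ m * (\<Prod>i\<in>-{k}. (x$i - c$i) ^ \<alpha> i)"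
  unfolding monomial_at_def by (rule prod_fun_upd_split)

lemma monomial_at_split:
  "monomial_at c \<alpha> x = (x$k - c$k) ^ \<alpha> k * (\<Prod>i\<in>-{k}. (x$i - c$i) ^ \<alpha> i)"
  using monomial_at_fun_upd[of c \<alpha> k "\<alpha> k"] by simp

lemma monomial_fun_upd_Suc: "monomial (\<alpha>(k := Suc (\<alpha> k))) x = x$k * monomial \<alpha> x"
  using monomial_at_fun_upd[of 0 \<alpha> k] monomial_at_split[of 0 \<alpha> x k]
  by (simp add: monomial_eq_monomial_at)

lemma has_real_derivative_monomial_at:
  "((\<lambda>t. monomial_at c \<alpha> (x + t *\<^sub>R axis k 1)) has_real_derivative
      of_nat (\<alpha> k) * monomial_at c (\<alpha>(k := \<alpha> k - 1)) x) (at 0)"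
proof -
  let ?R = "\<Prod>i\<in>-{k}. (x$i - c$i) ^ \<alpha> i"
  have "monomial_at c \<alpha> (x + t *\<^sub>R axis k 1) = (x$k + t - c$k) ^ \<alpha> k * ?R" for t
    by (subst monomial_at_split[of _ _ _ k]) (auto simp: axis_def intro!: prod.cong)
  moreover have "((\<lambda>t. (x$k + t - c$k) ^ \<alpha> k * ?R) has_real_derivative
      of_nat (\<alpha> k) * (x$k + 0 - c$k) ^ (\<alpha> k - 1) * 1 * ?R) (at 0)"
    by (intro derivative_eq_intros) auto
  ultimately show ?thesis
    by (simp add: monomial_at_fun_upd mult.assoc)
qed

lemma partial_monomial_at:
  "partial k (monomial_at c \<alpha>) = (\<lambda>x. of_nat (\<alpha> k) * monomial_at c (\<alpha>(k := \<alpha> k - 1)) x)"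
  by (rule ext, rule partial_eqI, rule has_real_derivative_monomial_at)

lemma coord_differentiable_monomial_at: "coord_differentiable (monomial_at c \<alpha>)"
  unfolding coord_differentiable_def using has_real_derivative_monomial_at real_differentiable_def by blast

lemma smooth_monomial_at: "smooth (monomial_at c \<alpha>)"
proof -
  have dop_scaled: "\<exists>b \<beta>. dop u (\<lambda>x. a * monomial_at c \<alpha> x) = (\<lambda>x. b * monomial_at c \<beta> x)"
    for u a \<alpha>
  proof (induction u arbitrary: a \<alpha>)
    case (Cons k u)
    have "partial k (\<lambda>x. a * monomial_at c \<alpha> x) =
        (\<lambda>x. (a * of_nat (\<alpha> k)) * monomial_at c (\<alpha>(k := \<alpha> k - 1)) x)"
      using partial_lincomb[of "monomial_at c \<alpha>" "monomial_at c \<alpha>" k a 0]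
      by (simp add: coord_differentiable_monomial_at partial_monomial_at mult.assoc)
    then show ?case
      using Cons.IH by simp
  qed auto
  show ?thesis
    unfolding smooth_def
  proof (intro allI conjI)
    fix u i x
    obtain b \<beta> where e: "dop u (monomial_at c \<alpha>) = (\<lambda>x. b * monomial_at c \<beta> x)"
      using dop_scaled[of u 1 \<alpha>] by auto
    show "continuous_on UNIV (dop u (monomial_at c \<alpha>))"
      unfolding e monomial_at_def by (intro continuous_intros)
    show "(\<lambda>t. dop u (monomial_at c \<alpha>) (x + t *\<^sub>R axis i 1)) differentiable (at 0)"
      unfolding e using coord_differentiable_monomial_at[of c \<beta>]
      unfolding coord_differentiable_def by simp
  qed
qed

lemma smooth_monomial: "smooth (monomial \<alpha>)"
  by (simp add: monomial_eq_monomial_at smooth_monomial_at)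

lemma dop_monomial_at_center:
  "dop u (monomial_at c \<alpha>) c = (if count (mset u) = \<alpha> then \<Prod>i\<in>UNIV. fact (\<alpha> i) else 0)"
proof (induction u arbitrary: \<alpha>)
  case Nil
  then show ?case
    by (auto simp: monomial_at_def fun_eq_iff)
next
  case (Cons k u)
  let ?\<beta> = "\<alpha>(k := \<alpha> k - 1)"
  have "dop (k # u) (monomial_at c \<alpha>) c = of_nat (\<alpha> k) * dop u (monomial_at c ?\<beta>) c"
    by (simp add: partial_monomial_at dop_cmult smooth_monomial_at)
  also have "\<dots> = (if count (mset (k # u)) = \<alpha> then \<Prod>i\<in>UNIV. fact (\<alpha> i) else 0)"
  proof (cases "\<alpha> k = 0")
    case True
    then have "count (mset (k # u)) \<noteq> \<alpha>"
      by (auto dest: fun_cong[of _ _ k])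
    then show ?thesis
      using True by simp
  next
    case False
    then have "count (mset (k # u)) = \<alpha> \<longleftrightarrow> count (mset u) = ?\<beta>"
      by (auto simp: fun_eq_iff split: if_splits)
    moreover have "(\<Prod>i\<in>UNIV. fact (\<alpha> i)) = (of_nat (\<alpha> k) * (\<Prod>i\<in>UNIV. fact (?\<beta> i)) :: real)"
      using prod_fun_upd_split[of "\<lambda>i m. fact m :: real" \<alpha> k "\<alpha> k"]
        prod_fun_upd_split[of "\<lambda>i m. fact m :: real" \<alpha> k "\<alpha> k - 1"] False
      by (simp add: fact_reduce)
    ultimately show ?thesis
      by (simp add: Cons.IH del: fun_upd_apply)
  qed
  finally show ?case .
qed

definition multi_indices :: "int \<Rightarrow> ('n::finite \<Rightarrow> nat) set" where
  "multi_indices k = {\<alpha>. int (\<Sum>i\<in>UNIV. \<alpha> i) \<le> k}"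

lemma poly_le_iff: "poly_le k p \<longleftrightarrow> (\<exists>coef. p = (\<lambda>x. \<Sum>\<alpha>\<in>multi_indices k. coef \<alpha> * monomial \<alpha> x))"
  by (simp add: poly_le_def monomial_def multi_indices_def)

lemma finite_multi_indices: "finite (multi_indices k :: ('n::finite \<Rightarrow> nat) set)"
proof (rule finite_subset)
  show "multi_indices k \<subseteq> PiE UNIV (\<lambda>_ :: 'n. {0..nat k})"
  proof
    fix \<alpha> :: "'n \<Rightarrow> nat"
    assume "\<alpha> \<in> multi_indices k"
    then have "\<alpha> i \<le> nat k" for i
      using member_le_sum[of i UNIV \<alpha>] unfolding multi_indices_def by (simp del: of_nat_sum)
    then show "\<alpha> \<in> PiE UNIV (\<lambda>_. {0..nat k})"
      by (simp add: PiE_UNIV_domain)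
  qed
qed (simp add: finite_PiE)

lemma multi_indices_mono: "k \<le> k' \<Longrightarrow> multi_indices k \<subseteq> multi_indices k'"
  unfolding multi_indices_def by auto

lemma multi_indices_neg: "k < 0 \<Longrightarrow> multi_indices k = {}"
  unfolding multi_indices_def by (auto simp del: of_nat_sum)

lemma multi_indices_0: "multi_indices 0 = {\<lambda>_. 0}"
  unfolding multi_indices_def by (auto simp: fun_eq_iff simp del: of_nat_sum)

lemma poly_le_mono:
  assumes "k \<le> k'" "poly_le k p"
  shows "poly_le k' p"
proof -
  obtain coef where p: "p = (\<lambda>x. \<Sum>\<alpha>\<in>multi_indices k. coef \<alpha> * monomial \<alpha> x)"
    using assms(2) poly_le_iff by blast
  let ?coef' = "\<lambda>\<alpha>. if \<alpha> \<in> multi_indices k then coef \<alpha> else 0"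
  have "p = (\<lambda>x. \<Sum>\<alpha>\<in>multi_indices k'. ?coef' \<alpha> * monomial \<alpha> x)"
    unfolding p using multi_indices_mono[OF assms(1)]
    by (intro ext sum.mono_neutral_cong_left) (auto simp: finite_multi_indices)
  then show ?thesis
    unfolding poly_le_iff by (rule exI[of _ ?coef'])
qed

lemma poly_le_lincomb:
  assumes "poly_le k p" "poly_le k q"
  shows "poly_le k (\<lambda>x. a * p x + b * q x)"
proof -
  obtain cp cq where "p = (\<lambda>x. \<Sum>\<alpha>\<in>multi_indices k. cp \<alpha> * monomial \<alpha> x)"
    and "q = (\<lambda>x. \<Sum>\<alpha>\<in>multi_indices k. cq \<alpha> * monomial \<alpha> x)"
    using assms poly_le_iff by blast
  then have "(\<lambda>x. a * p x + b * q x) =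
      (\<lambda>x. \<Sum>\<alpha>\<in>multi_indices k. (a * cp \<alpha> + b * cq \<alpha>) * monomial \<alpha> x)"
    by (simp add: sum.distrib sum_distrib_left algebra_simps)
  then show ?thesis
    unfolding poly_le_iff by (rule exI[of _ "\<lambda>\<alpha>. a * cp \<alpha> + b * cq \<alpha>"])
qed

lemma poly_le_zero: "poly_le k (\<lambda>x. 0)"
  unfolding poly_le_iff by (rule exI[of _ "\<lambda>_. 0"]) simp

lemma poly_le_neg: "k < 0 \<Longrightarrow> poly_le k p \<Longrightarrow> p = (\<lambda>x. 0)"
  unfolding poly_le_iff by (auto simp: multi_indices_neg)

lemma poly_le_0_iff:
  fixes p :: "real^'n::finite \<Rightarrow> real"
  shows "poly_le 0 p \<longleftrightarrow> (\<exists>a. p = (\<lambda>x. a))"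
proof -
  have "poly_le 0 p \<longleftrightarrow> (\<exists>coef :: ('n \<Rightarrow> nat) \<Rightarrow> real. p = (\<lambda>x. coef (\<lambda>_. 0)))"
    unfolding poly_le_iff by (simp add: multi_indices_0 monomial_def)
  also have "\<dots> \<longleftrightarrow> (\<exists>a. p = (\<lambda>x. a))"
  proof
    assume "\<exists>a. p = (\<lambda>x. a)"
    then obtain a where "p = (\<lambda>x. a)"
      by blast
    then show "\<exists>coef :: ('n \<Rightarrow> nat) \<Rightarrow> real. p = (\<lambda>x. coef (\<lambda>_. 0))"
      by (intro exI[of _ "\<lambda>_. a"])
  qed blast
  finally show ?thesis .
qed

lemma poly_le_const: "poly_le 0 (\<lambda>x. a)"
  unfolding poly_le_0_iff by blast

lemma poly_le_monomial: "poly_le (int (\<Sum>i\<in>UNIV. \<alpha> i)) (monomial \<alpha>)"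
proof -
  let ?M = "multi_indices (int (\<Sum>i\<in>UNIV. \<alpha> i))"
  have "(\<Sum>\<beta>\<in>?M. (if \<beta> = \<alpha> then 1 else 0) * monomial \<beta> x) = (\<Sum>\<beta>\<in>?M. if \<beta> = \<alpha> then monomial \<alpha> x else 0)"
    for x by (rule sum.cong) auto
  moreover have "\<alpha> \<in> ?M"
    by (simp add: multi_indices_def)
  ultimately have "monomial \<alpha> = (\<lambda>x. \<Sum>\<beta>\<in>?M. (if \<beta> = \<alpha> then 1 else 0) * monomial \<beta> x)"
    by (simp add: finite_multi_indices)
  then show ?thesis
    unfolding poly_le_iff by (rule exI[of _ "\<lambda>\<beta>. if \<beta> = \<alpha> then 1 else 0"])
qed

lemma poly_le_coord: "poly_le 1 (\<lambda>x. x$i)"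
proof -
  have "monomial ((\<lambda>_. 0)(i := Suc 0)) = (\<lambda>x. x$i)"
    using monomial_fun_upd_Suc[of "\<lambda>_. 0" i] by (simp add: monomial_def fun_eq_iff del: fun_upd_apply)
  then show ?thesis
    using poly_le_monomial[of "(\<lambda>_. 0)(i := Suc 0)"] by simp
qed

lemma smooth_poly_le: "poly_le k p \<Longrightarrow> smooth p"
  unfolding poly_le_iff by (auto intro!: smooth_sum finite_multi_indices smooth_monomial)

lemma poly_le_imp_poly_deg:
  assumes "poly_le k p" "p \<noteq> (\<lambda>x. 0)"
  obtains d where "int d \<le> k" "poly_deg d p"
proof -
  have "0 \<le> k"
    using assms poly_le_neg by force
  define d where "d = (LEAST d. poly_le (int d) p)"
  have "poly_le (int (nat k)) p"
    using assms(1) \<open>0 \<le> k\<close> by simp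
  then have "poly_le (int d) p" and "d \<le> nat k"
    unfolding d_def by (rule LeastI, rule Least_le)
  moreover have "\<not> poly_le (int d - 1) p"
  proof
    assume less: "poly_le (int d - 1) p"
    show False
    proof (cases d)
      case 0
      then show False
        using less assms(2) poly_le_neg by force
    next
      case (Suc d')
      then have "poly_le (int d') p"
        using less by simp
      then show False
        using Suc Least_le[of "\<lambda>d. poly_le (int d) p" d'] unfolding d_def by simp
    qed
  qed
  ultimately show thesis
    using that \<open>0 \<le> k\<close> unfolding poly_deg_def by (simp add: le_nat_iff)
qed

definition polynomial :: "(real^'n::finite \<Rightarrow> real) \<Rightarrow> bool" where
  "polynomial p \<longleftrightarrow> (\<exists>n. poly_le (int n) p)"

lemma polynomialI: "poly_le k p \<Longrightarrow> polynomial p"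
  unfolding polynomial_def by (metis nat_le_iff nle_le poly_le_mono)

lemma smooth_polynomial: "polynomial p \<Longrightarrow> smooth p"
  unfolding polynomial_def using smooth_poly_le by blast

lemma polynomial_lincomb:
  assumes "polynomial p" "polynomial q"
  shows "polynomial (\<lambda>x. a * p x + b * q x)"
proof -
  obtain n m where "poly_le (int n) p" "poly_le (int m) q"
    using assms unfolding polynomial_def by blast
  then have "poly_le (int (max n m)) p" "poly_le (int (max n m)) q"
    by (auto elim!: poly_le_mono[rotated])
  then show ?thesis
    unfolding polynomial_def by (blast intro: poly_le_lincomb)
qed

lemma polynomial_const: "polynomial (\<lambda>x. a)"
  using polynomialI poly_le_const by blast

lemma polynomial_coord: "polynomial (\<lambda>x. x$i)"
  using polynomialI poly_le_coord by blast

lemma polynomial_monomial: "polynomial (monomial \<alpha>)"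
  using polynomialI poly_le_monomial by blast

lemma polynomial_sum:
  "finite A \<Longrightarrow> (\<And>a. a \<in> A \<Longrightarrow> polynomial (F a)) \<Longrightarrow> polynomial (\<lambda>x. \<Sum>a\<in>A. c a * F a x)"
proof (induction A rule: finite_induct)
  case (insert a A)
  then have "polynomial (\<lambda>x. c a * F a x + 1 * (\<Sum>a\<in>A. c a * F a x))"
    by (intro polynomial_lincomb) auto
  then show ?case
    using insert by simp
qed (simp add: polynomial_const)

lemma polynomial_iff_sum_monomials:
  "polynomial p \<longleftrightarrow> (\<exists>n coef. p = (\<lambda>x. \<Sum>\<alpha>\<in>multi_indices (int n). coef \<alpha> * monomial \<alpha> x))"
  unfolding polynomial_def poly_le_iff ..

lemma monomial_add: "monomial (\<lambda>i. \<alpha> i + \<beta> i) x = monomial \<alpha> x * monomial \<beta> x"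
  by (simp add: monomial_def power_add prod.distrib)

lemma polynomial_mult:
  assumes "polynomial p" "polynomial q"
  shows "polynomial (\<lambda>x. p x * q x)"
proof -
  obtain n m cp cq
    where p: "p = (\<lambda>x. \<Sum>\<alpha>\<in>multi_indices (int n). cp \<alpha> * monomial \<alpha> x)"
      and q: "q = (\<lambda>x. \<Sum>\<beta>\<in>multi_indices (int m). cq \<beta> * monomial \<beta> x)"
    using assms unfolding polynomial_iff_sum_monomials by blast
  have "(\<lambda>x. p x * q x) = (\<lambda>x. \<Sum>\<alpha>\<in>multi_indices (int n). cp \<alpha> *
      (\<Sum>\<beta>\<in>multi_indices (int m). cq \<beta> * monomial (\<lambda>i. \<alpha> i + \<beta> i) x))"
    unfolding p q sum_product by (simp add: monomial_add sum_distrib_left mult_ac)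
  then show ?thesis
    by (simp add: polynomial_sum finite_multi_indices polynomial_monomial)
qed

lemma polynomial_power: "polynomial p \<Longrightarrow> polynomial (\<lambda>x. p x ^ n)"
  by (induction n) (simp_all add: polynomial_const polynomial_mult)

lemma polynomial_prod:
  "finite A \<Longrightarrow> (\<And>a. a \<in> A \<Longrightarrow> polynomial (F a)) \<Longrightarrow> polynomial (\<lambda>x. \<Prod>a\<in>A. F a x)"
  by (induction A rule: finite_induct) (simp_all add: polynomial_const polynomial_mult)

lemma polynomial_monomial_at: "polynomial (monomial_at c \<alpha>)"
proof -
  have "polynomial (\<lambda>x. 1 * x$i + (- c$i) * 1)" for i
    by (intro polynomial_lincomb polynomial_coord polynomial_const)
  then show ?thesis
    unfolding monomial_at_def by (intro polynomial_prod polynomial_power) auto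
qed


section \<open>Taylor polynomials and bidifferential operators\<close>

lemma exists_word_with_counts: "\<exists>u. count (mset u) = (\<alpha> :: 'n::finite \<Rightarrow> nat)"
  by (metis ex_mset count_Abs_multiset finite)

lemma sum_count_mset:
  fixes u :: "'n::finite list"
  shows "(\<Sum>i\<in>UNIV. count (mset u) i) = length u"
proof -
  have "(\<Sum>i\<in>UNIV. count (mset u) i) = sum (count (mset u)) (set_mset (mset u))"
    by (rule sum.mono_neutral_right) auto
  then show ?thesis
    using size_multiset_overloaded_eq[of "mset u"] by simp
qed

lemma polynomial_taylor:
  fixes f :: "real^'n::finite \<Rightarrow> real"
  assumes f: "smooth f"
  obtains p where "polynomial p" "\<And>u. length u \<le> N \<Longrightarrow> dop u p c = dop u f c"
proof -
  have "\<exists>word. \<forall>\<alpha> :: 'n \<Rightarrow> nat. count (mset (word \<alpha>)) = \<alpha>"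
    by (rule choice) (use exists_word_with_counts in blast)
  then obtain word :: "('n \<Rightarrow> nat) \<Rightarrow> 'n list" where word: "\<And>\<alpha>. count (mset (word \<alpha>)) = \<alpha>"
    by blast
  define coef where "coef \<alpha> = dop (word \<alpha>) f c / (\<Prod>i\<in>UNIV. fact (\<alpha> i))" for \<alpha>
  define p where "p x = (\<Sum>\<alpha>\<in>multi_indices (int N). coef \<alpha> * monomial_at c \<alpha> x)" for x
  have "polynomial p"
    unfolding p_def by (intro polynomial_sum finite_multi_indices polynomial_monomial_at)
  moreover have "dop u p c = dop u f c" if "length u \<le> N" for u
  proof -
    have u: "count (mset u) \<in> multi_indices (int N)"
      using that by (simp add: multi_indices_def sum_count_mset del: of_nat_sum)
    have "dop u p c = (\<Sum>\<alpha>\<in>multi_indices (int N). coef \<alpha> * dop u (monomial_at c \<alpha>) c)"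
      unfolding p_def by (simp add: dop_sum finite_multi_indices smooth_monomial_at)
    also have "\<dots> = (\<Sum>\<alpha>\<in>multi_indices (int N).
        if \<alpha> = count (mset u) then coef \<alpha> * (\<Prod>i\<in>UNIV. fact (\<alpha> i)) else 0)"
      by (rule sum.cong) (auto simp: dop_monomial_at_center)
    also have "\<dots> = coef (count (mset u)) * (\<Prod>i\<in>UNIV. fact (count (mset u) i))"
      using u by (simp add: finite_multi_indices)
    also have "\<dots> = dop (word (count (mset u))) f c"
      by (simp add: coef_def)
    also have "\<dots> = dop u f c"
      by (rule fun_cong[OF dop_mset_eq[OF f]]) (rule multiset_eqI, simp add: word)
    finally show ?thesis .
  qed
  ultimately show thesis
    by (rule that)
qed

lemma bidiff_flip:
  assumes "bidiff P"
  shows "bidiff (\<lambda>f g. P g f)"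
proof -
  obtain S coef where S: "finite S" "\<forall>p\<in>S. smooth (coef p)"
    and P: "\<And>f g. smooth f \<Longrightarrow> smooth g \<Longrightarrow>
      P f g = (\<lambda>x. \<Sum>(u, v)\<in>S. coef (u, v) x * dop u f x * dop v g x)"
    using assms unfolding bidiff_def by blast
  have "P g f = (\<lambda>x. \<Sum>(u, v)\<in>prod.swap ` S. (coef \<circ> prod.swap) (u, v) x * dop u f x * dop v g x)"
    if "smooth f" "smooth g" for f g
    by (simp add: P that sum.reindex case_prod_unfold mult_ac)
  moreover have "finite (prod.swap ` S)" "\<forall>p\<in>prod.swap ` S. smooth ((coef \<circ> prod.swap) p)"
    using S by auto
  ultimately show ?thesis
    unfolding bidiff_def by blast
qed

lemma bidiff_sum_left:
  assumes "bidiff P" "finite A" "\<And>a. a \<in> A \<Longrightarrow> smooth (F a)" "smooth h"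
  shows "P (\<lambda>x. \<Sum>a\<in>A. c a * F a x) h = (\<lambda>x. \<Sum>a\<in>A. c a * P (F a) h x)"
proof
  fix x
  obtain S coef where "finite S"
    and P: "\<And>f g. smooth f \<Longrightarrow> smooth g \<Longrightarrow>
      P f g = (\<lambda>x. \<Sum>(u, v)\<in>S. coef (u, v) x * dop u f x * dop v g x)"
    using assms(1) unfolding bidiff_def by blast
  have "P (\<lambda>x. \<Sum>a\<in>A. c a * F a x) h x =
      (\<Sum>(u, v)\<in>S. coef (u, v) x * (\<Sum>a\<in>A. c a * dop u (F a) x) * dop v h x)"
    using assms by (simp add: P smooth_sum dop_sum)
  also have "\<dots> = (\<Sum>a\<in>A. c a * (\<Sum>(u, v)\<in>S. coef (u, v) x * dop u (F a) x * dop v h x))"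
    by (simp add: sum_distrib_left sum_distrib_right case_prod_unfold mult_ac sum.swap[of _ A])
  also have "\<dots> = (\<Sum>a\<in>A. c a * P (F a) h x)"
    using assms by (simp add: P)
  finally show "P (\<lambda>x. \<Sum>a\<in>A. c a * F a x) h x = (\<Sum>a\<in>A. c a * P (F a) h x)" .
qed

lemma bidiff_sum_right:
  assumes "bidiff P" "finite A" "\<And>a. a \<in> A \<Longrightarrow> smooth (F a)" "smooth h"
  shows "P h (\<lambda>x. \<Sum>a\<in>A. c a * F a x) = (\<lambda>x. \<Sum>a\<in>A. c a * P h (F a) x)"
  using bidiff_sum_left[OF bidiff_flip[OF assms(1)] assms(2-4)] .

lemma bidiff_zero_left: "bidiff P \<Longrightarrow> smooth h \<Longrightarrow> P (\<lambda>x. 0) h = (\<lambda>x. 0)"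
  using bidiff_sum_left[of P "{}"] by simp

lemma bidiff_zero_right: "bidiff P \<Longrightarrow> smooth h \<Longrightarrow> P h (\<lambda>x. 0) = (\<lambda>x. 0)"
  using bidiff_sum_right[of P "{}"] by simp

lemma bidiff_cmult_right:
  "bidiff P \<Longrightarrow> smooth f \<Longrightarrow> smooth h \<Longrightarrow> P h (\<lambda>x. a * f x) = (\<lambda>x. a * P h f x)"
  using bidiff_sum_right[of P "{()}" "\<lambda>_. f" h "\<lambda>_. a"] by simp

lemma bidiff_jet_determined:
  fixes P :: "(real^'n::finite \<Rightarrow> real) \<Rightarrow> (real^'n \<Rightarrow> real) \<Rightarrow> real^'n \<Rightarrow> real"
  assumes "bidiff P"
  obtains N where "\<And>f g f' g' x. smooth f \<Longrightarrow> smooth g \<Longrightarrow> smooth f' \<Longrightarrow> smooth g' \<Longrightarrow>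
    (\<And>u. length u \<le> N \<Longrightarrow> dop u f x = dop u f' x \<and> dop u g x = dop u g' x) \<Longrightarrow>
    P f g x = P f' g' x"
proof -
  obtain S coef where "finite S"
    and P: "\<And>f g. smooth f \<Longrightarrow> smooth g \<Longrightarrow>
      P f g = (\<lambda>x. \<Sum>(u, v)\<in>S. coef (u, v) x * dop u f x * dop v g x)"
    using assms unfolding bidiff_def by blast
  define N where "N = (\<Sum>(u, v)\<in>S. length u + length v)"
  have len: "length u \<le> N" "length v \<le> N" if "(u, v) \<in> S" for u v
    using member_le_sum[OF that, of "\<lambda>(u, v). length u + length v"] \<open>finite S\<close>
    unfolding N_def by auto
  show thesis
  proof (rule that)
    fix f g f' g' :: "real^'n \<Rightarrow> real" and x
    assume "smooth f" "smooth g" "smooth f'" "smooth g'"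
      and jet: "\<And>u. length u \<le> N \<Longrightarrow> dop u f x = dop u f' x \<and> dop u g x = dop u g' x"
    have "(\<Sum>(u, v)\<in>S. coef (u, v) x * dop u f x * dop v g x) =
        (\<Sum>(u, v)\<in>S. coef (u, v) x * dop u f' x * dop v g' x)"
    proof (rule sum.cong[OF refl], clarify)
      fix u v
      assume "(u, v) \<in> S"
      then show "coef (u, v) x * dop u f x * dop v g x = coef (u, v) x * dop u f' x * dop v g' x"
        using jet[OF len(1)] jet[OF len(2)] by simp
    qed
    with \<open>smooth f\<close> \<open>smooth g\<close> \<open>smooth f'\<close> \<open>smooth g'\<close> show "P f g x = P f' g' x"
      by (simp add: P)
  qed
qed

lemma bidiff_eq_if_eq_on_polynomials:
  assumes "bidiff P" "bidiff P'"
    and eq: "\<And>p q. polynomial p \<Longrightarrow> polynomial q \<Longrightarrow> P p q = P' p q"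
    and "smooth f" "smooth g"
  shows "P f g = P' f g"
proof
  fix x
  obtain N where N: "\<And>f g f' g' x. smooth f \<Longrightarrow> smooth g \<Longrightarrow> smooth f' \<Longrightarrow> smooth g' \<Longrightarrow>
      (\<And>u. length u \<le> N \<Longrightarrow> dop u f x = dop u f' x \<and> dop u g x = dop u g' x) \<Longrightarrow>
      P f g x = P f' g' x"
    using bidiff_jet_determined[OF assms(1)] by blast
  obtain N' where N': "\<And>f g f' g' x. smooth f \<Longrightarrow> smooth g \<Longrightarrow> smooth f' \<Longrightarrow> smooth g' \<Longrightarrow>
      (\<And>u. length u \<le> N' \<Longrightarrow> dop u f x = dop u f' x \<and> dop u g x = dop u g' x) \<Longrightarrow>
      P' f g x = P' f' g' x"
    using bidiff_jet_determined[OF assms(2)] by blast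
  obtain p q where "polynomial p" "polynomial q"
    and jet: "\<And>u. length u \<le> max N N' \<Longrightarrow> dop u p x = dop u f x \<and> dop u q x = dop u g x"
    using polynomial_taylor[OF \<open>smooth f\<close>, of "max N N'" x]
      polynomial_taylor[OF \<open>smooth g\<close>, of "max N N'" x] by metis
  have "P f g x = P p q x"
    using jet by (intro N) (auto simp: assms smooth_polynomial \<open>polynomial p\<close> \<open>polynomial q\<close>)
  also have "\<dots> = P' p q x"
    by (simp add: eq \<open>polynomial p\<close> \<open>polynomial q\<close>)
  also have "\<dots> = P' f g x"
    using jet by (intro N') (auto simp: assms smooth_polynomial \<open>polynomial p\<close> \<open>polynomial q\<close>)
  finally show "P f g x = P' f g x" .
qed


section \<open>Polarization\<close>

lemma prod_list_map_eq_prod_count: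
  fixes a :: "'n::finite \<Rightarrow> 'b::comm_monoid_mult"
  shows "prod_list (map a w) = (\<Prod>i\<in>UNIV. a i ^ count (mset w) i)"
proof (induction w)
  case (Cons k w)
  have "(\<Prod>i\<in>UNIV. a i ^ count (mset (k # w)) i) = (\<Prod>i\<in>UNIV. (if i = k then a i else 1) * a i ^ count (mset w) i)"
    by (rule prod.cong) auto
  then show ?case
    by (simp add: Cons prod.distrib)
qed simp

lemma power_sum_eq_sum_words:
  fixes a :: "'n::finite \<Rightarrow> 'b::comm_semiring_1"
  shows "(\<Sum>i\<in>UNIV. a i) ^ n = (\<Sum>w\<in>{w. length w = n}. prod_list (map a w))"
proof (induction n)
  case (Suc n)
  have words: "{w. length w = Suc n} = (\<lambda>(w, i). i # w) ` ({w. length w = n} \<times> UNIV)"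
    using lists_length_Suc_eq[of UNIV n] by simp
  have "inj_on (\<lambda>(w, i :: 'n). i # w) ({w. length w = n} \<times> UNIV)"
    by (auto simp: inj_on_def)
  then have "(\<Sum>w\<in>{w. length w = Suc n}. prod_list (map a w)) =
      (\<Sum>w\<in>{w. length w = n}. \<Sum>i\<in>UNIV. a i * prod_list (map a w))"
    unfolding words by (simp add: sum.reindex sum.cartesian_product case_prod_unfold)
  then show ?case
    by (simp add: Suc sum_distrib_left sum_distrib_right mult.commute)
qed simp

lemma inner_power_eq_sum_words:
  fixes X :: "real^'n::finite"
  shows "(X \<bullet> x) ^ n = (\<Sum>w\<in>{w. length w = n}. monomial (count (mset w)) X * monomial (count (mset w)) x)"
  unfolding inner_vec_def power_sum_eq_sum_words prod_list_map_eq_prod_count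
  by (simp add: monomial_def power_mult_distrib prod.distrib)

lemma finite_words_length: "finite {w :: 'n::finite list. length w = n}"
  using finite_lists_length_eq[of "UNIV :: 'n set" n] by simp

lemma coeff_sum_eq_0_if_sum_monomials_eq_0:
  assumes "finite S" and vanish: "\<And>X. (\<Sum>s\<in>S. d s * monomial (\<kappa> s) X) = 0"
  shows "(\<Sum>s\<in>{s\<in>S. \<kappa> s = \<alpha>}. d s) = 0"
proof -
  obtain u where u: "count (mset u) = \<alpha>"
    using exists_word_with_counts by blast
  have "0 = dop u (\<lambda>X. \<Sum>s\<in>S. d s * monomial (\<kappa> s) X) 0"
    by (simp add: vanish)
  also have "\<dots> = (\<Sum>s\<in>S. d s * dop u (monomial (\<kappa> s)) 0)"
    by (simp add: dop_sum \<open>finite S\<close> smooth_monomial)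
  also have "\<dots> = (\<Sum>s\<in>S. if \<kappa> s = \<alpha> then d s * (\<Prod>i\<in>UNIV. fact (\<alpha> i)) else 0)"
    by (rule sum.cong) (auto simp: monomial_eq_monomial_at dop_monomial_at_center u)
  also have "\<dots> = (\<Sum>s\<in>{s\<in>S. \<kappa> s = \<alpha>}. d s) * (\<Prod>i\<in>UNIV. fact (\<alpha> i))"
    by (simp add: sum.inter_filter[symmetric] \<open>finite S\<close> sum_distrib_right)
  finally show ?thesis
    by simp
qed

lemma coeff_eq_0_if_sum_over_words_eq_0:
  fixes d :: "('n::finite \<Rightarrow> nat) \<Rightarrow> real"
  assumes "\<And>X. (\<Sum>w\<in>{w. length w = (\<Sum>i\<in>UNIV. \<alpha> i)}.
      d (count (mset w)) * monomial (count (mset w)) X) = 0"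
  shows "d \<alpha> = 0"
proof -
  let ?W\<alpha> = "{w. length w = (\<Sum>i\<in>UNIV. \<alpha> i) \<and> count (mset w) = \<alpha>}"
  have "(\<Sum>w\<in>?W\<alpha>. d (count (mset w))) = 0"
    using coeff_sum_eq_0_if_sum_monomials_eq_0[OF finite_words_length assms] by simp
  then have "card ?W\<alpha> * d \<alpha> = 0"
    by simp
  moreover have "card ?W\<alpha> \<noteq> 0"
  proof -
    obtain u where "count (mset u) = \<alpha>"
      using exists_word_with_counts by blast
    then have "u \<in> ?W\<alpha>"
      using sum_count_mset[of u] by simp
    moreover have "finite ?W\<alpha>"
      using finite_words_length[of "\<Sum>i\<in>UNIV. \<alpha> i"] by (rule finite_subset[rotated]) auto
    ultimately show ?thesis
      by auto
  qed
  ultimately show ?thesis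
    by simp
qed

lemma bidiff_eq_on_polynomials_if_eq_on_powers:
  fixes P P' :: "(real^'n::finite \<Rightarrow> real) \<Rightarrow> (real^'n \<Rightarrow> real) \<Rightarrow> real^'n \<Rightarrow> real"
  assumes "bidiff P" "bidiff P'" "smooth h"
    and powers: "\<And>X n. P (\<lambda>x. (X \<bullet> x) ^ n) h = P' (\<lambda>x. (X \<bullet> x) ^ n) h"
    and "polynomial p"
  shows "P p h = P' p h"
proof
  fix x
  define D where "D f = P f h x - P' f h x" for f
  have D_sum: "D (\<lambda>x. \<Sum>a\<in>A. c a * F a x) = (\<Sum>a\<in>A. c a * D (F a))"
    if "finite A" "\<And>a. a \<in> A \<Longrightarrow> smooth (F a)" for A :: "'a set" and c F
    using bidiff_sum_left[OF assms(1) that \<open>smooth h\<close>] bidiff_sum_left[OF assms(2) that \<open>smooth h\<close>]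
    by (simp add: D_def sum_subtractf right_diff_distrib)
  have "D (monomial \<alpha>) = 0" for \<alpha>
  proof (rule coeff_eq_0_if_sum_over_words_eq_0)
    let ?W = "{w. length w = (\<Sum>i\<in>UNIV. \<alpha> i)}"
    fix X
    have "(\<Sum>w\<in>?W. D (monomial (count (mset w))) * monomial (count (mset w)) X) =
        (\<Sum>w\<in>?W. monomial (count (mset w)) X * D (monomial (count (mset w))))"
      by (simp add: mult.commute)
    also have "\<dots> = D (\<lambda>x. \<Sum>w\<in>?W. monomial (count (mset w)) X * monomial (count (mset w)) x)"
      by (rule D_sum[symmetric]) (simp_all add: finite_words_length smooth_monomial)
    also have "\<dots> = D (\<lambda>x. (X \<bullet> x) ^ (\<Sum>i\<in>UNIV. \<alpha> i))"
      by (simp add: inner_power_eq_sum_words)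
    also have "\<dots> = 0"
      by (simp add: D_def powers)
    finally show "(\<Sum>w\<in>?W. D (monomial (count (mset w))) * monomial (count (mset w)) X) = 0" .
  qed
  moreover obtain n coef where "p = (\<lambda>x. \<Sum>\<alpha>\<in>multi_indices (int n). coef \<alpha> * monomial \<alpha> x)"
    using \<open>polynomial p\<close> unfolding polynomial_iff_sum_monomials by blast
  ultimately have "D p = 0"
    by (simp add: D_sum finite_multi_indices smooth_monomial)
  then show "P p h x = P' p h x"
    by (simp add: D_def)
qed


section \<open>Star products with property (P1)\<close>

definition series_of :: "(real^'n::finite \<Rightarrow> real) \<Rightarrow> nat \<Rightarrow> real^'n \<Rightarrow> real" where
  "series_of f k = (if k = 0 then f else (\<lambda>x. 0))"

lemma smooth_series_of: "smooth f \<Longrightarrow> smooth (series_of f k)"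
  by (simp add: series_of_def smooth_zero)

lemma star_series_of_left:
  assumes "\<And>j. bidiff (Pr j)" "\<And>k. smooth (B k)"
  shows "star Pr (series_of f) B k x = (\<Sum>i\<le>k. Pr i f (B (k - i)) x)"
proof -
  have "star Pr (series_of f) B k x = (\<Sum>i\<le>k. \<Sum>j\<le>k - i. if j = 0 then Pr i f (B (k - i)) x else 0)"
    unfolding star_def by (intro sum.cong refl) (auto simp: series_of_def bidiff_zero_left assms)
  then show ?thesis
    by simp
qed

lemma star_series_of_right:
  assumes "\<And>j. bidiff (Pr j)" "\<And>k. smooth (A k)"
  shows "star Pr A (series_of g) k x = (\<Sum>i\<le>k. Pr i (A (k - i)) g x)"
proof -
  have "star Pr A (series_of g) k x = (\<Sum>i\<le>k. \<Sum>j\<le>k - i. if j = k - i then Pr i (A (k - i)) g x else 0)"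
    unfolding star_def by (intro sum.cong refl) (auto simp: series_of_def bidiff_zero_right assms)
  then show ?thesis
    by simp
qed

lemma star_series_of_series_of:
  assumes "\<And>j. bidiff (Pr j)" "smooth f" "smooth g"
  shows "star Pr (series_of f) (series_of g) = (\<lambda>k. Pr k f g)"
proof (intro ext)
  fix k x
  have "star Pr (series_of f) (series_of g) k x = (\<Sum>i\<le>k. if i = k then Pr k f g x else 0)"
    unfolding star_series_of_left[OF assms(1) smooth_series_of[OF assms(3)]]
    by (intro sum.cong refl) (auto simp: series_of_def bidiff_zero_right assms)
  then show "star Pr (series_of f) (series_of g) k x = Pr k f g x"
    by simp
qed

locale P1_star_product =
  fixes c :: "'n::finite \<Rightarrow> 'n \<Rightarrow> 'n \<Rightarrow> real"
    and Pr :: "nat \<Rightarrow> (real^'n \<Rightarrow> real) \<Rightarrow> (real^'n \<Rightarrow> real) \<Rightarrow> real^'n \<Rightarrow> real"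
  assumes star_product: "star_product c Pr" and P1: "P1 Pr"
begin

lemma bidiff_Pr: "bidiff (Pr j)"
  using star_product unfolding star_product_def by blast

lemma Pr_0: "smooth a \<Longrightarrow> smooth b \<Longrightarrow> Pr 0 a b = (\<lambda>x. a x * b x)"
  using star_product unfolding star_product_def by blast

lemma poly_le_Pr_minus_product:
  assumes "poly_le (int n) p" "poly_le (int m) q"
  shows "poly_le (int n + int m - 1) (\<lambda>x. Pr j p q x - (if j = 0 then p x * q x else 0))"
proof (cases "p = (\<lambda>x. 0) \<or> q = (\<lambda>x. 0)")
  case True
  then have "(\<lambda>x. Pr j p q x - (if j = 0 then p x * q x else 0)) = (\<lambda>x. 0)"
    using assms by (auto simp: bidiff_zero_left bidiff_zero_right bidiff_Pr smooth_poly_le)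
  then show ?thesis
    by (simp add: poly_le_zero)
next
  case False
  then obtain d e where "d \<le> n" "poly_deg d p" "e \<le> m" "poly_deg e q"
    using poly_le_imp_poly_deg[OF assms(1)] poly_le_imp_poly_deg[OF assms(2)] by (metis of_nat_le_iff)
  then have "poly_le (int d + int e - 1) (\<lambda>x. Pr j p q x - (if j = 0 then p x * q x else 0))"
    using P1 unfolding P1_def by blast
  then show ?thesis
    by (rule poly_le_mono[rotated]) (use \<open>d \<le> n\<close> \<open>e \<le> m\<close> in linarith)
qed

lemma poly_le_Pr:
  "0 < j \<Longrightarrow> poly_le (int n) p \<Longrightarrow> poly_le (int m) q \<Longrightarrow> poly_le (int n + int m - 1) (Pr j p q)"
  using poly_le_Pr_minus_product[of n p m q j] by simp

lemma polynomial_Pr: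
  assumes "polynomial p" "polynomial q"
  shows "polynomial (Pr j p q)"
proof (cases j)
  case 0
  then show ?thesis
    using assms by (simp add: Pr_0 smooth_polynomial polynomial_mult)
next
  case (Suc j')
  obtain n m where "poly_le (int n) p" "poly_le (int m) q"
    using assms unfolding polynomial_def by blast
  then show ?thesis
    using Suc by (blast intro: polynomialI poly_le_Pr)
qed

lemma Pr_assoc:
  assumes "polynomial p" "polynomial q" "polynomial r"
  shows "(\<Sum>l\<le>k. Pr l (Pr (k - l) p q) r x) = (\<Sum>l\<le>k. Pr l p (Pr (k - l) q r) x)"
proof -
  have smooth: "smooth p" "smooth q" "smooth r" "\<And>l. smooth (Pr l p q)" "\<And>l. smooth (Pr l q r)"
    using assms by (simp_all add: smooth_polynomial polynomial_Pr)
  have "star Pr (star Pr (series_of p) (series_of q)) (series_of r) =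
      star Pr (series_of p) (star Pr (series_of q) (series_of r))"
    using star_product smooth unfolding star_product_def by (blast intro: smooth_series_of)
  then have "star Pr (\<lambda>l. Pr l p q) (series_of r) k x = star Pr (series_of p) (\<lambda>l. Pr l q r) k x"
    by (simp add: star_series_of_series_of bidiff_Pr smooth)
  then show ?thesis
    by (simp add: star_series_of_left star_series_of_right bidiff_Pr smooth)
qed

lemma Pr_one_one: "Pr k (\<lambda>x. 1) (\<lambda>x. 1) = (if k = 0 then (\<lambda>x. 1) else (\<lambda>x. 0))"
proof (cases k)
  case 0
  then show ?thesis
    by (simp add: Pr_0 smooth_polynomial polynomial_const)
next
  case (Suc k')
  have "poly_le (int 0 + int 0 - 1) (Pr k (\<lambda>x. 1) (\<lambda>x. 1))"
    using Suc by (intro poly_le_Pr) (simp_all add: poly_le_const)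
  then show ?thesis
    using Suc poly_le_neg[of "-1"] by simp
qed

lemma Pr_one_right: "polynomial p \<Longrightarrow> Pr k p (\<lambda>x. 1) = (if k = 0 then p else (\<lambda>x. 0))"
proof (induction k rule: less_induct)
  case (less k)
  let ?one = "\<lambda>x :: real^'n. 1 :: real"
  have smooth: "smooth p" "smooth ?one"
    using less.prems by (simp_all add: smooth_polynomial polynomial_const)
  show ?case
  proof (cases "k = 0")
    case True
    then show ?thesis
      by (simp add: Pr_0 smooth)
  next
    case False
    have "Pr k p ?one x = 0" for x
    proof -
      \<comment> \<open>Coefficient k of (p * 1) * 1 = p * (1 * 1): as 1 * 1 = 1, the left side contains
        Pr k p 1 twice (for l = 0 and l = k), the right side once.\<close>
      have "Pr l (Pr (k - l) p ?one) ?one x = (if l = 0 then Pr k p ?one x else 0) +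
          (if l = k then Pr k p ?one x else 0)" if "l \<le> k" for l
        using that False less.IH[of "k - l"] less.prems
        by (auto simp: Pr_0 smooth_polynomial polynomial_Pr polynomial_const bidiff_zero_left bidiff_Pr)
      then have "(\<Sum>l\<le>k. Pr l (Pr (k - l) p ?one) ?one x) = 2 * Pr k p ?one x"
        by (simp add: sum.distrib)
      moreover have "Pr l p (Pr (k - l) ?one ?one) x = (if l = k then Pr k p ?one x else 0)"
        if "l \<le> k" for l
        using that by (auto simp: Pr_one_one bidiff_zero_right bidiff_Pr smooth)
      then have "(\<Sum>l\<le>k. Pr l p (Pr (k - l) ?one ?one) x) = Pr k p ?one x"
        by simp
      ultimately show ?thesis
        using Pr_assoc[OF less.prems polynomial_const polynomial_const] by simp
    qed
    then show ?thesis
      using False by auto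
  qed
qed

lemma Pr_const_right: "polynomial p \<Longrightarrow> Pr k p (\<lambda>x. a) = (\<lambda>x. if k = 0 then a * p x else 0)"
  using bidiff_cmult_right[OF bidiff_Pr, of "\<lambda>x. 1" p k a]
  by (simp add: Pr_one_right smooth_polynomial polynomial_const)

lemma Pr_coord_mult_right:
  assumes "polynomial p" "polynomial g"
  shows "Pr k p (\<lambda>x. x$i * g x) x =
    (\<Sum>l\<le>k. Pr l (Pr (k - l) p (\<lambda>x. x$i)) g x) - (\<Sum>l<k. Pr l p (Pr (k - l) (\<lambda>x. x$i) g) x)"
proof -
  have "Pr 0 (\<lambda>x. x$i) g = (\<lambda>x. x$i * g x)"
    using assms by (simp add: Pr_0 smooth_polynomial polynomial_coord)
  then have "(\<Sum>l\<le>k. Pr l p (Pr (k - l) (\<lambda>x. x$i) g) x) =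
      (\<Sum>l<k. Pr l p (Pr (k - l) (\<lambda>x. x$i) g) x) + Pr k p (\<lambda>x. x$i * g x) x"
    by (simp add: lessThan_Suc_atMost[symmetric])
  then show ?thesis
    using Pr_assoc[OF assms(1) polynomial_coord assms(2), where k = k and x = x] by simp
qed

end

lemma bidiff_eq_on_poly_le_if_eq_on_monomials:
  assumes "bidiff P" "bidiff P'" "smooth p"
    and eq: "\<And>\<alpha>. \<alpha> \<in> multi_indices k \<Longrightarrow> P p (monomial \<alpha>) = P' p (monomial \<alpha>)"
    and "poly_le k q"
  shows "P p q = P' p q"
proof -
  obtain coef where q: "q = (\<lambda>x. \<Sum>\<alpha>\<in>multi_indices k. coef \<alpha> * monomial \<alpha> x)"
    using \<open>poly_le k q\<close> poly_le_iff by blast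
  show ?thesis
    unfolding q using assms(1-3)
    by (simp add: bidiff_sum_right finite_multi_indices smooth_monomial eq)
qed

lemma monomial_Suc_degree_split:
  assumes "(\<Sum>i\<in>UNIV. \<alpha> i) = Suc m"
  obtains i \<beta> where "(\<Sum>i\<in>UNIV. \<beta> i) = m" "monomial \<alpha> = (\<lambda>x. x$i * monomial \<beta> x)"
proof -
  obtain i where "\<alpha> i \<noteq> 0"
    using assms by (metis nat.distinct(1) sum.neutral)
  define \<beta> where "\<beta> = \<alpha>(i := \<alpha> i - 1)"
  have \<alpha>: "\<alpha> = \<beta>(i := Suc (\<beta> i))"
    using \<open>\<alpha> i \<noteq> 0\<close> by (auto simp: \<beta>_def)
  have "Suc m = Suc (\<beta> i) + (\<Sum>j\<in>-{i}. \<beta> j)"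
    using assms sum.remove[of UNIV i \<alpha>] by (simp add: \<alpha> Compl_eq_Diff_UNIV)
  also have "\<dots> = Suc (\<Sum>j\<in>UNIV. \<beta> j)"
    using sum.remove[of UNIV i \<beta>] by (simp add: Compl_eq_Diff_UNIV)
  finally have "(\<Sum>j\<in>UNIV. \<beta> j) = m"
    by simp
  moreover have "monomial \<alpha> = (\<lambda>x. x$i * monomial \<beta> x)"
    by (subst \<alpha>) (simp add: monomial_fun_upd_Suc fun_eq_iff del: fun_upd_apply)
  ultimately show thesis
    by (rule that)
qed

lemma P1_star_products_eq_on_coord_mult:
  fixes Pr Pr' :: "nat \<Rightarrow> (real^'n::finite \<Rightarrow> real) \<Rightarrow> (real^'n \<Rightarrow> real) \<Rightarrow> real^'n \<Rightarrow> real"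
  assumes P: "P1_star_product c Pr" and P': "P1_star_product c Pr'"
    and coord: "\<And>p i j. polynomial p \<Longrightarrow> Pr j p (\<lambda>x. x$i) = Pr' j p (\<lambda>x. x$i)"
    and IH: "\<And>p q k. poly_le (int m) q \<Longrightarrow> polynomial p \<Longrightarrow> Pr k p q = Pr' k p q"
    and "polynomial p" "poly_le (int m) g"
  shows "Pr k p (\<lambda>x. x$i * g x) = Pr' k p (\<lambda>x. x$i * g x)"
proof
  fix x
  let ?Y = "\<lambda>x :: real^'n. x$i"
  have "polynomial g"
    using \<open>poly_le (int m) g\<close> by (rule polynomialI)
  have left: "Pr l (Pr (k - l) p ?Y) g x = Pr' l (Pr' (k - l) p ?Y) g x" for l
    using IH[OF \<open>poly_le (int m) g\<close> P1_star_product.polynomial_Pr[OF P \<open>polynomial p\<close> polynomial_coord]]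
      coord[OF \<open>polynomial p\<close>] by simp
  have right: "Pr l p (Pr (k - l) ?Y g) x = Pr' l p (Pr' (k - l) ?Y g) x" if "l < k" for l
  proof -
    \<comment> \<open>By (P1) the correction term Pr (k - l) x_i g has degree at most m, so the
      induction hypothesis applies to it as a second factor.\<close>
    have "poly_le (int 1 + int m - 1) (Pr (k - l) ?Y g)"
      using that \<open>poly_le (int m) g\<close> by (intro P1_star_product.poly_le_Pr[OF P]) (simp_all add: poly_le_coord)
    then show ?thesis
      using IH[OF _ \<open>polynomial p\<close>] IH[OF \<open>poly_le (int m) g\<close> polynomial_coord] by simp
  qed
  show "Pr k p (\<lambda>x. x$i * g x) x = Pr' k p (\<lambda>x. x$i * g x) x"
    unfolding P1_star_product.Pr_coord_mult_right[OF P \<open>polynomial p\<close> \<open>polynomial g\<close>]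
      P1_star_product.Pr_coord_mult_right[OF P' \<open>polynomial p\<close> \<open>polynomial g\<close>]
    using left right by simp
qed

lemma P1_star_products_eq_on_polynomials:
  assumes P: "P1_star_product c Pr" and P': "P1_star_product c Pr'"
    and coord: "\<And>p i j. polynomial p \<Longrightarrow> Pr j p (\<lambda>x. x$i) = Pr' j p (\<lambda>x. x$i)"
  shows "poly_le (int m) q \<Longrightarrow> polynomial p \<Longrightarrow> Pr k p q = Pr' k p q"
proof (induction m arbitrary: p q k)
  case 0
  then obtain a where "q = (\<lambda>x. a)"
    using poly_le_0_iff by auto
  then show ?case
    using P1_star_product.Pr_const_right[OF P 0(2)] P1_star_product.Pr_const_right[OF P' 0(2)] by simp
next
  case (Suc m)
  have "Pr k p (monomial \<alpha>) = Pr' k p (monomial \<alpha>)" if "\<alpha> \<in> multi_indices (int (Suc m))" for \<alpha>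
  proof (cases "(\<Sum>i\<in>UNIV. \<alpha> i) \<le> m")
    case True
    then have "poly_le (int m) (monomial \<alpha>)"
      by (intro poly_le_mono[OF _ poly_le_monomial]) (simp del: of_nat_sum)
    then show ?thesis
      by (rule Suc.IH[OF _ Suc.prems(2)])
  next
    case False
    then have "(\<Sum>i\<in>UNIV. \<alpha> i) = Suc m"
      using that by (simp add: multi_indices_def del: of_nat_sum)
    then obtain i \<beta> where "(\<Sum>i\<in>UNIV. \<beta> i) = m" and \<alpha>: "monomial \<alpha> = (\<lambda>x. x$i * monomial \<beta> x)"
      by (rule monomial_Suc_degree_split)
    then have \<beta>: "poly_le (int m) (monomial \<beta>)"
      using poly_le_monomial[of \<beta>] by simp
    show ?thesis
      unfolding \<alpha> by (rule P1_star_products_eq_on_coord_mult[OF P P' coord Suc.IH Suc.prems(2) \<beta>])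
  qed
  then show ?case
    by (rule bidiff_eq_on_poly_le_if_eq_on_monomials[OF P1_star_product.bidiff_Pr[OF P]
          P1_star_product.bidiff_Pr[OF P'] smooth_polynomial[OF Suc.prems(2)] _ Suc.prems(1)])
qed

theorem theorem2p1p3:
  fixes c :: "'n::finite \<Rightarrow> 'n \<Rightarrow> 'n \<Rightarrow> real"
    and Pr Pr' :: "nat \<Rightarrow> (real^'n \<Rightarrow> real) \<Rightarrow> (real^'n \<Rightarrow> real) \<Rightarrow> real^'n \<Rightarrow> real"
  assumes "lie_structure c"
    and "star_product c Pr" and "P1 Pr"
    and "star_product c Pr'" and "P1 Pr'"
    and "\<forall>X Y :: real^'n. \<forall>n j.
           Pr j (\<lambda>x. (X \<bullet> x) ^ n) (\<lambda>x. Y \<bullet> x) = Pr' j (\<lambda>x. (X \<bullet> x) ^ n) (\<lambda>x. Y \<bullet> x)"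
  shows "\<forall>j a b. smooth a \<longrightarrow> smooth b \<longrightarrow> Pr j a b = Pr' j a b"
proof (intro allI impI)
  have P: "P1_star_product c Pr" and P': "P1_star_product c Pr'"
    using assms(2-5) by (simp_all add: P1_star_product_def)
  note bidiff = P1_star_product.bidiff_Pr[OF P] P1_star_product.bidiff_Pr[OF P']
  have coord: "Pr j p (\<lambda>x. x$i) = Pr' j p (\<lambda>x. x$i)" if "polynomial p" for p i j
  proof (rule bidiff_eq_on_polynomials_if_eq_on_powers[OF bidiff _ _ that])
    show "smooth (\<lambda>x :: real^'n. x$i)"
      by (simp add: smooth_polynomial polynomial_coord)
    have "(\<lambda>x. axis i 1 \<bullet> x) = (\<lambda>x :: real^'n. x$i)"
      by (simp add: fun_eq_iff inner_axis')
    then show "Pr j (\<lambda>x. (X \<bullet> x) ^ n) (\<lambda>x. x$i) = Pr' j (\<lambda>x. (X \<bullet> x) ^ n) (\<lambda>x. x$i)" for X n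
      using assms(6) by metis
  qed
  have polynomials: "Pr j p q = Pr' j p q" if "polynomial p" "polynomial q" for j p q
    using that P1_star_products_eq_on_polynomials[OF P P' coord] unfolding polynomial_def by blast
  fix j and a b :: "real^'n \<Rightarrow> real"
  assume "smooth a" "smooth b"
  show "Pr j a b = Pr' j a b"
    by (rule bidiff_eq_if_eq_on_polynomials[OF bidiff polynomials \<open>smooth a\<close> \<open>smooth b\<close>])
qed

end
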